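(* Consider a stationary memoryless discrete source over a finite alphabet $A$ with $|A|\geq 2$ and symbol distribution $P$. Assume every symbol probability is positive and less than $1$. Let $\rho$ be the reciprocal of the smallest symbol probability, so that $\rho>1$. Let $T$ be a Tunstall parse tree with $n$ leaves, and suppose $$\log_2 n-c(\rho)>0,\qquad\text{where } c(\rho)=\left(\frac{\rho\ln\rho}{\rho-1}-1-\ln\frac{\rho\ln\rho}{\rho-1}\right)\frac{1}{\ln 2}.$$ Then the compression rate $R=\lceil\log_2 n\rceil/E[L]$ of the corresponding variable-to-fixed length code, in which each leaf is encoded by a binary codeword of length $\lceil\log_2 n\rceil$, satisfies $$R\leq\frac{\lceil\log_2 n\rceil\,H(P)}{\log_2 n-c(\rho)}.$$
   Context: A parse tree is a complete $|A|$-ary tree whose edges are labeled by source symbols. Each leaf corresponds to a source segment, namely the string of labels on its root-to-leaf path. The probability of a leaf is the product of the probabilities of its labels. A Tunstall parse tree is obtained by starting from the tree whose root has one child per symbol of $A$, and then repeatedly replacing a leaf of maximum probability by an internal node with $|A|$ children. Here $n$ is the number of leaves obtained after some number of such expansions. $L$ is the length (depth) of the random source segment parsed, i.e., of the leaf reached by the source. $H(P)$ is the source entropy in bits. *)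

theory Defs
  imports Complex_Main
begin

text \<open>Source segments are lists of symbols (root-to-leaf label strings).
  A complete parse tree is represented by its set of leaves.\<close>

definition seg_prob :: "('a \<Rightarrow> real) \<Rightarrow> 'a list \<Rightarrow> real" where
  "seg_prob P w = (\<Prod>i<length w. P (w ! i))"

inductive tunstall_tree :: "('a \<Rightarrow> real) \<Rightarrow> 'a list set \<Rightarrow> bool" for P where
  init: "tunstall_tree P {[a] | a. True}"
| expand: "tunstall_tree P S \<Longrightarrow> w \<in> S \<Longrightarrow> (\<forall>v\<in>S. seg_prob P v \<le> seg_prob P w)
     \<Longrightarrow> tunstall_tree P ((S - {w}) \<union> {w @ [a] | a. True})"

definition expected_length :: "('a \<Rightarrow> real) \<Rightarrow> 'a list set \<Rightarrow> real" where
  "expected_length P S = (\<Sum>w\<in>S. seg_prob P w * real (length w))"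

definition entropy2 :: "('a::finite \<Rightarrow> real) \<Rightarrow> real" where
  "entropy2 P = - (\<Sum>a\<in>UNIV. P a * log 2 (P a))"

definition c_rho :: "real \<Rightarrow> real" where
  "c_rho \<rho> = (\<rho> * ln \<rho> / (\<rho> - 1) - 1 - ln (\<rho> * ln \<rho> / (\<rho> - 1))) * (1 / ln 2)"

definition tunstall_rate :: "('a \<Rightarrow> real) \<Rightarrow> 'a list set \<Rightarrow> real" where
  "tunstall_rate P S = real_of_int \<lceil>log 2 (real (card S))\<rceil> / expected_length P S"

end

theory Submission
  imports Defs "HOL-Analysis.Convex"
begin

text \<open>Expanding a leaf of probability q adds q to E[L] and q H(P) to the entropy
  of the leaf distribution, so by induction the leaf entropy equals E[L] H(P).
  Expanding only leaves of maximum probability keeps every leaf probability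
  within the factor \<rho> of every other; a distribution on n points with this
  property has entropy at least log n - c(\<rho>), because x ln x lies below its
  chord on [a, \<rho> a], where a is the smallest probability.  Hence
  E[L] H(P) \<ge> log n - c(\<rho>), and the bound on the rate follows.\<close>

definition expand_leaf :: "'a list set \<Rightarrow> 'a list \<Rightarrow> 'a list set" where
  "expand_leaf S w = (S - {w}) \<union> range (\<lambda>a. w @ [a])"

definition leaf_entropy :: "('a \<Rightarrow> real) \<Rightarrow> 'a list set \<Rightarrow> real" where
  "leaf_entropy P S = - (\<Sum>w\<in>S. seg_prob P w * log 2 (seg_prob P w))"

lemma tunstall_tree_induct [consumes 1, case_names init expand]:
  assumes "tunstall_tree P S"
    and "Q (range (\<lambda>a. [a]))"
    and "\<And>S w. tunstall_tree P S \<Longrightarrow> Q S \<Longrightarrow> w \<in> S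
           \<Longrightarrow> \<forall>v\<in>S. seg_prob P v \<le> seg_prob P w \<Longrightarrow> Q (expand_leaf S w)"
  shows "Q S"
proof -
  have init_eq: "{[a] | a. True} = range (\<lambda>a. [a])"
    and children_eq: "\<And>w. {w @ [a] | a. True} = range (\<lambda>a. w @ [a])"
    by auto
  from assms(1) show ?thesis
  proof (induction rule: tunstall_tree.induct)
    case init
    show ?case unfolding init_eq by (rule assms(2))
  next
    case (expand S w)
    then show ?case unfolding children_eq using assms(3)[of S w] by (simp add: expand_leaf_def)
  qed
qed

lemma seg_prob_snoc: "seg_prob P (w @ [a]) = seg_prob P w * P a"
  unfolding seg_prob_def by (simp add: prod.lessThan_Suc nth_append)

lemma seg_prob_singleton: "seg_prob P [a] = P a"
  by (simp add: seg_prob_def)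

lemma seg_prob_pos: "(\<And>a. 0 < P a) \<Longrightarrow> 0 < seg_prob P w"
  unfolding seg_prob_def by (intro prod_pos) auto

lemma sum_singleton_leaves:
  "(\<Sum>w\<in>range (\<lambda>a. [a]). f w) = (\<Sum>a\<in>UNIV. f [a])"
  by (subst sum.reindex) (auto simp: inj_def)

lemma
  fixes S :: "'a::finite list set" and f :: "'a list \<Rightarrow> 'b::ab_group_add"
  assumes "finite S" "w \<in> S" "\<And>a. w @ [a] \<notin> S"
  shows sum_expand_leaf: "sum f (expand_leaf S w) = sum f S - f w + (\<Sum>a\<in>UNIV. f (w @ [a]))"
    and card_expand_leaf: "card (expand_leaf S w) = card S - 1 + card (UNIV :: 'a set)"
proof -
  have inj: "inj (\<lambda>a. w @ [a])" by (auto simp: inj_def)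
  have disj: "(S - {w}) \<inter> range (\<lambda>a. w @ [a]) = {}" using assms(3) by auto
  show "sum f (expand_leaf S w) = sum f S - f w + (\<Sum>a\<in>UNIV. f (w @ [a]))"
    unfolding expand_leaf_def using assms disj
    by (simp add: sum.union_disjoint sum_diff1 sum.reindex[OF inj])
  show "card (expand_leaf S w) = card S - 1 + card (UNIV :: 'a set)"
    unfolding expand_leaf_def using assms disj
    by (simp add: card_Un_disjoint card_image[OF inj])
qed

lemma tunstall_tree_finite:
  fixes P :: "'a::finite \<Rightarrow> real"
  shows "tunstall_tree P S \<Longrightarrow> finite S"
  by (induction rule: tunstall_tree_induct) (auto simp: expand_leaf_def)

lemma tunstall_tree_prefix_free:
  assumes "tunstall_tree P S" "u \<in> S" "u @ z \<in> S"
  shows "z = []"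
  using assms
proof (induction arbitrary: u z rule: tunstall_tree_induct)
  case init
  then show ?case by (auto simp: Cons_eq_append_conv)
next
  case (expand S w)
  have leaf: "\<And>u z. u \<in> S \<Longrightarrow> u @ z \<in> S \<Longrightarrow> z = []" by (rule expand.IH)
  consider "u \<in> S" "u @ z \<in> S" | a where "u \<in> S" "u \<noteq> w" "u @ z = w @ [a]"
    | a where "u = w @ [a]" "u @ z \<in> S" | a b where "u = w @ [a]" "u @ z = w @ [b]"
    using expand.prems unfolding expand_leaf_def by blast
  then show ?case
  proof cases
    case (2 a)
    then obtain z' where "u = w @ z' \<or> u @ z' = w"
      by (auto simp: append_eq_append_conv2)
    with 2 leaf \<open>w \<in> S\<close> show ?thesis by auto
  next
    case (3 a)
    then have "w @ ([a] @ z) \<in> S" by simp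
    with leaf \<open>w \<in> S\<close> show ?thesis by blast
  qed (use leaf in auto)
qed

lemma tunstall_tree_children_not_leaves:
  "tunstall_tree P S \<Longrightarrow> w \<in> S \<Longrightarrow> w @ [a] \<notin> S"
  using tunstall_tree_prefix_free by fastforce

lemma tunstall_tree_card_ge:
  fixes P :: "'a::finite \<Rightarrow> real"
  assumes "tunstall_tree P S"
  shows "card (UNIV :: 'a set) \<le> card S"
  using assms
proof (induction rule: tunstall_tree_induct)
  case init
  show ?case by (simp add: card_image inj_def)
next
  case (expand S w)
  note leaf = tunstall_tree_finite[OF expand.hyps(1)] expand.hyps(2)
    tunstall_tree_children_not_leaves[OF expand.hyps(1,2)]
  show ?case
    using expand.IH leaf \<open>w \<in> S\<close> by (simp add: card_expand_leaf[OF leaf] card_gt_0_iff)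
qed

lemma tunstall_tree_prob_sum:
  fixes P :: "'a::finite \<Rightarrow> real"
  assumes "tunstall_tree P S" "(\<Sum>a\<in>UNIV. P a) = 1"
  shows "sum (seg_prob P) S = 1"
  using assms(1)
proof (induction rule: tunstall_tree_induct)
  case init
  show ?case using assms(2) by (simp add: sum_singleton_leaves seg_prob_singleton)
next
  case (expand S w)
  note leaf = tunstall_tree_finite[OF expand.hyps(1)] expand.hyps(2)
    tunstall_tree_children_not_leaves[OF expand.hyps(1,2)]
  show ?case
    using expand.IH assms(2) by (simp add: sum_expand_leaf[OF leaf] seg_prob_snoc flip: sum_distrib_left)
qed

text \<open>A new leaf has probability at most that of the expanded leaf w, which is
  maximal, and at least m times it.\<close>

lemma tunstall_tree_prob_ratio:
  fixes P :: "'a::finite \<Rightarrow> real"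
  assumes "tunstall_tree P S"
    and "\<And>a. 0 \<le> P a" "\<And>a. P a \<le> 1" "0 \<le> m" "\<And>a. m \<le> P a"
    and "u \<in> S" "v \<in> S"
  shows "m * seg_prob P u \<le> seg_prob P v"
  using assms(1,6,7)
proof (induction arbitrary: u v rule: tunstall_tree_induct)
  case init
  then obtain a b where "u = [a]" "v = [b]" by auto
  moreover have "m * P a \<le> m" using assms(3,4) by (simp add: mult_left_le)
  ultimately show ?case using assms(5)[of b] by (simp add: seg_prob_singleton)
next
  case (expand S w)
  let ?q = "seg_prob P w"
  have q0: "0 \<le> ?q" unfolding seg_prob_def using assms(2) by (simp add: prod_nonneg)
  have child_le: "seg_prob P (w @ [a]) \<le> ?q" for a
    using assms(3)[of a] q0 by (simp add: seg_prob_snoc mult_left_le)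
  have child_ge: "m * ?q \<le> seg_prob P (w @ [a])" for a
    using assms(5)[of a] q0 by (simp add: seg_prob_snoc mult.commute mult_right_mono)
  have old_ge: "m * ?q \<le> seg_prob P x" if "x \<in> S" for x
    using expand.IH[OF \<open>w \<in> S\<close> that] .
  have "m * seg_prob P u \<le> m * ?q"
    using expand.prems(1) expand.hyps(3) child_le assms(4)
    by (auto simp: expand_leaf_def intro: mult_left_mono)
  moreover have "m * ?q \<le> seg_prob P v"
    using expand.prems(2) old_ge child_ge by (auto simp: expand_leaf_def)
  ultimately show ?case by linarith
qed

lemma expected_length_expand_leaf:
  fixes P :: "'a::finite \<Rightarrow> real"
  assumes "finite S" "w \<in> S" "\<And>a. w @ [a] \<notin> S" "(\<Sum>a\<in>UNIV. P a) = 1"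
  shows "expected_length P (expand_leaf S w) = expected_length P S + seg_prob P w"
proof -
  have "(\<Sum>a\<in>UNIV. seg_prob P (w @ [a]) * real (length (w @ [a])))
      = seg_prob P w * (length w + 1) * (\<Sum>a\<in>UNIV. P a)"
    unfolding seg_prob_snoc sum_distrib_left by (simp add: mult_ac)
  then show ?thesis
    using assms unfolding expected_length_def by (simp add: sum_expand_leaf algebra_simps)
qed

lemma leaf_entropy_expand_leaf:
  fixes P :: "'a::finite \<Rightarrow> real"
  assumes "finite S" "w \<in> S" "\<And>a. w @ [a] \<notin> S" "(\<Sum>a\<in>UNIV. P a) = 1" "\<And>a. 0 < P a"
  shows "leaf_entropy P (expand_leaf S w) = leaf_entropy P S + seg_prob P w * entropy2 P"
proof -
  let ?q = "seg_prob P w"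
  have "(\<Sum>a\<in>UNIV. seg_prob P (w @ [a]) * log 2 (seg_prob P (w @ [a])))
      = (\<Sum>a\<in>UNIV. ?q * log 2 ?q * P a + ?q * (P a * log 2 (P a)))"
    using seg_prob_pos[of P w] assms(5)
    by (intro sum.cong) (auto simp: seg_prob_snoc log_mult algebra_simps)
  also have "\<dots> = ?q * log 2 ?q - ?q * entropy2 P"
    using assms(4) by (simp add: entropy2_def sum.distrib flip: sum_distrib_left)
  finally show ?thesis
    using assms unfolding leaf_entropy_def by (simp add: sum_expand_leaf)
qed

lemma tunstall_tree_expected_length_ge_1:
  fixes P :: "'a::finite \<Rightarrow> real"
  assumes "tunstall_tree P S" "(\<Sum>a\<in>UNIV. P a) = 1" "\<And>a. 0 < P a"
  shows "1 \<le> expected_length P S"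
  using assms(1)
proof (induction rule: tunstall_tree_induct)
  case init
  show ?case using assms(2)
    by (simp add: expected_length_def sum_singleton_leaves seg_prob_singleton)
next
  case (expand S w)
  note leaf = tunstall_tree_finite[OF expand.hyps(1)] expand.hyps(2)
    tunstall_tree_children_not_leaves[OF expand.hyps(1,2)]
  show ?case
    using expand.IH seg_prob_pos[of P w] assms(3)
    by (simp add: expected_length_expand_leaf[OF leaf assms(2)])
qed

lemma tunstall_tree_leaf_entropy:
  fixes P :: "'a::finite \<Rightarrow> real"
  assumes "tunstall_tree P S" "(\<Sum>a\<in>UNIV. P a) = 1" "\<And>a. 0 < P a"
  shows "leaf_entropy P S = expected_length P S * entropy2 P"
  using assms(1)
proof (induction rule: tunstall_tree_induct)
  case init
  show ?case using assms(2)
    by (simp add: leaf_entropy_def entropy2_def expected_length_def sum_singleton_leaves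
        seg_prob_singleton)
next
  case (expand S w)
  note leaf = tunstall_tree_finite[OF expand.hyps(1)] expand.hyps(2)
    tunstall_tree_children_not_leaves[OF expand.hyps(1,2)]
  show ?case
    using expand.IH
    by (simp add: expected_length_expand_leaf[OF leaf assms(2)]
        leaf_entropy_expand_leaf[OF leaf assms(2,3)] algebra_simps)
qed

lemma mult_ln_le_chord:
  fixes a x \<rho> :: real
  assumes "0 < a" "a \<le> x" "x \<le> \<rho> * a" "1 < \<rho>"
  shows "x * ln x \<le> x * ln a + \<rho> * ln \<rho> / (\<rho> - 1) * (x - a)"
proof -
  have "convex_on {a..\<rho> * a} (\<lambda>x. x * ln x)"
  proof (rule f''_ge0_imp_convex[where f' = "\<lambda>x. ln x + 1" and f'' = "\<lambda>x. 1 / x"])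
    fix y :: real assume "y \<in> {a..\<rho> * a}"
    then have "0 < y" using assms(1) by auto
    then show "((\<lambda>x. x * ln x) has_real_derivative ln y + 1) (at y)"
      and "((\<lambda>x. ln x + 1) has_real_derivative 1 / y) (at y)"
      and "0 \<le> 1 / y"
      by (auto intro!: derivative_eq_intros)
  qed simp
  then have "x * ln x \<le> (\<rho> * a * ln (\<rho> * a) - a * ln a) / (\<rho> * a - a) * (x - a) + a * ln a"
    using convex_onD_Icc' assms(2,3) by fastforce
  also have "\<dots> = x * ln a + \<rho> * ln \<rho> / (\<rho> - 1) * (x - a)"
    using assms(1,4) by (simp add: ln_mult field_simps)
  finally show ?thesis .
qed

text \<open>The extremal case is a distribution taking only the values a and \<rho> a;
  optimising over a is what produces c(\<rho>), via ln y \<le> y - 1.\<close>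

lemma entropy_ge_log_card_minus_c_rho:
  fixes q :: "'b \<Rightarrow> real"
  assumes "finite S" "\<And>w. w \<in> S \<Longrightarrow> 0 < q w" "sum q S = 1"
    and balanced: "\<And>u v. u \<in> S \<Longrightarrow> v \<in> S \<Longrightarrow> q u \<le> \<rho> * q v" and "1 < \<rho>"
  shows "log 2 (card S) - c_rho \<rho> \<le> - (\<Sum>w\<in>S. q w * log 2 (q w))"
proof -
  define a where "a = Min (q ` S)"
  define K where "K = \<rho> * ln \<rho> / (\<rho> - 1)"
  have "S \<noteq> {}" using assms(3) by auto
  then have "a \<in> q ` S" unfolding a_def using assms(1) by (intro Min_in) auto
  then obtain w0 where "w0 \<in> S" "q w0 = a" by auto
  then have a_pos: "0 < a" using assms(2) by auto
  have a_le: "a \<le> q v" if "v \<in> S" for v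
    unfolding a_def using assms(1) that by auto
  have le_a: "q v \<le> \<rho> * a" if "v \<in> S" for v
    using balanced[OF that \<open>w0 \<in> S\<close>] \<open>q w0 = a\<close> by simp
  have K_pos: "0 < K" unfolding K_def using assms(5) by simp
  have card_pos: "0 < real (card S)" using assms(1) \<open>S \<noteq> {}\<close> by (simp add: card_gt_0_iff)
  have "(\<Sum>v\<in>S. q v * ln (q v)) \<le> (\<Sum>v\<in>S. q v * ln a + K * (q v - a))"
    unfolding K_def using a_pos a_le le_a assms(5) by (intro sum_mono mult_ln_le_chord) auto
  also have "\<dots> = ln a + K * (1 - card S * a)"
    using assms(3) by (simp add: sum.distrib sum_subtractf algebra_simps flip: sum_distrib_left)
  finally have chord: "(\<Sum>v\<in>S. q v * ln (q v)) \<le> ln a + K * (1 - card S * a)" .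
  have "ln (card S * a * K) \<le> card S * a * K - 1"
    using card_pos a_pos K_pos by (intro ln_le_minus_one) auto
  then have "ln (card S) + ln a + ln K \<le> card S * a * K - 1"
    using card_pos a_pos K_pos by (simp add: ln_mult)
  with chord have "ln (card S) - (K - 1 - ln K) \<le> - (\<Sum>v\<in>S. q v * ln (q v))"
    by (simp add: algebra_simps)
  then have "(ln (card S) - (K - 1 - ln K)) / ln 2 \<le> - (\<Sum>v\<in>S. q v * ln (q v)) / ln 2"
    by (intro divide_right_mono) auto
  then show ?thesis
    by (simp add: c_rho_def K_def log_def sum_divide_distrib diff_divide_distrib)
qed

theorem theorem4:
  fixes P :: "'a::finite \<Rightarrow> real" and T :: "'a list set" and n :: nat and \<rho> :: real
  assumes "card (UNIV :: 'a set) \<ge> 2"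
    and "\<And>a. 0 < P a" and "\<And>a. P a < 1"
    and "(\<Sum>a\<in>UNIV. P a) = 1"
    and "\<rho> = 1 / Min (range P)"
    and "tunstall_tree P T"
    and "n = card T"
    and "log 2 (real n) - c_rho \<rho> > 0"
  shows "tunstall_rate P T \<le>
           real_of_int \<lceil>log 2 (real n)\<rceil> * entropy2 P / (log 2 (real n) - c_rho \<rho>)"
proof -
  define m where "m = Min (range P)"
  have "m \<in> range P" unfolding m_def by (intro Min_in) auto
  then have m_pos: "0 < m" and "m < 1" using assms(2,3) by auto
  have balanced: "seg_prob P u \<le> \<rho> * seg_prob P v" if "u \<in> T" "v \<in> T" for u v
  proof -
    have "m * seg_prob P u \<le> seg_prob P v"
      using tunstall_tree_prob_ratio[OF assms(6) _ _ _ _ that] assms(2,3) m_pos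
      by (simp add: m_def less_imp_le)
    then show ?thesis using assms(5) m_pos by (simp add: m_def field_simps)
  qed
  have "log 2 n - c_rho \<rho> \<le> leaf_entropy P T"
    unfolding leaf_entropy_def assms(7)
    using entropy_ge_log_card_minus_c_rho[OF tunstall_tree_finite[OF assms(6)] seg_prob_pos
        tunstall_tree_prob_sum[OF assms(6,4)] balanced] assms(2,5) m_pos \<open>m < 1\<close>
    by (simp add: m_def)
  also have "\<dots> = expected_length P T * entropy2 P"
    using tunstall_tree_leaf_entropy[OF assms(6,4,2)] .
  finally have entropy_bound: "log 2 n - c_rho \<rho> \<le> expected_length P T * entropy2 P" .
  have "1 \<le> log 2 n" using tunstall_tree_card_ge[OF assms(6)] assms(1,7) by simp
  then have ceiling_nonneg: "0 \<le> real_of_int \<lceil>log 2 n\<rceil>" by linarith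
  have "real_of_int \<lceil>log 2 n\<rceil> * (log 2 n - c_rho \<rho>)
      \<le> real_of_int \<lceil>log 2 n\<rceil> * entropy2 P * expected_length P T"
    using mult_left_mono[OF entropy_bound ceiling_nonneg] by (simp add: mult_ac)
  with assms(8) tunstall_tree_expected_length_ge_1[OF assms(6,4,2)] show ?thesis
    unfolding tunstall_rate_def assms(7)[symmetric] by (simp add: divide_simps)
qed

end
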